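(* For any weighted finite graph $G$ with $N$ vertices and each $1\leq k\leq N$, \[ \lambda_{N-k+1}\geq 2\overline{h}^*(k). \]
   Context: $G=(V,E,w)$ is a finite undirected graph without self-loops, $N=|V|$, positive symmetric edge weights $w_{uv}$ ($w_{uv}=0$ for non-edges), degrees $d_u=\sum_v w_{uv}$ (implicitly positive). $|E(A,B)|:=\sum_{u\in A,v\in B}w_{uv}$, $\mathrm{vol}(A):=\sum_{u\in A}d_u$. The normalized Laplacian $\Delta f(u)=\frac{1}{d_u}\sum_v w_{uv}(f(u)-f(v))$ has eigenvalues (with multiplicity) $0=\lambda_1\leq\cdots\leq\lambda_N\leq 2$. A $k$-sub-bipartition is a collection of $k$ pairs $(V_1,V_2),\ldots,(V_{2k-1},V_{2k})$ of pairwise disjoint subsets of $V$ with $V_{2i-1}\cup V_{2i}\neq\emptyset$ for each $i$; for it set $V^*:=V\setminus\bigcup_{i=1}^k(V_{2i-1}\cup V_{2i})$. Define \[ \overline{h}^*(k):=\max\min_{1\leq i\leq k}\frac{2|E(V_{2i-1},V_{2i})|+\frac12|E(V_{2i-1}\cup V_{2i},V^* )|}{\mathrm{vol}(V_{2i-1}\cup V_{2i})}, \] the maximum over all $k$-sub-bipartitions. *)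

theory Defs
  imports "Jordan_Normal_Form.Char_Poly"
begin

(* Weighted graph on vertex set {0..<N}, weights w :: nat => nat => real
   (w u v = 0 means no edge). *)

definition deg :: "nat \<Rightarrow> (nat \<Rightarrow> nat \<Rightarrow> real) \<Rightarrow> nat \<Rightarrow> real" where
  "deg N w u = (\<Sum>v<N. w u v)"

definition Ew :: "(nat \<Rightarrow> nat \<Rightarrow> real) \<Rightarrow> nat set \<Rightarrow> nat set \<Rightarrow> real" where
  "Ew w A B = (\<Sum>u\<in>A. \<Sum>v\<in>B. w u v)"

definition vol :: "nat \<Rightarrow> (nat \<Rightarrow> nat \<Rightarrow> real) \<Rightarrow> nat set \<Rightarrow> real" where
  "vol N w A = (\<Sum>u\<in>A. deg N w u)"

(* matrix of the normalized Laplacian  (\<Delta> f)(u) = (1/d_u) \<Sum>_v w_uv (f u - f v) *)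
definition norm_lap :: "nat \<Rightarrow> (nat \<Rightarrow> nat \<Rightarrow> real) \<Rightarrow> real mat" where
  "norm_lap N w = mat N N (\<lambda>(i,j). (if i = j then 1 else 0) - w i j / deg N w i)"

(* eigenvalues with multiplicity, in nondecreasing order: lap_eigs N w ! (j-1) = \<lambda>_j *)
definition lap_eigs :: "nat \<Rightarrow> (nat \<Rightarrow> nat \<Rightarrow> real) \<Rightarrow> real list" where
  "lap_eigs N w = (THE ls. length ls = N \<and> sorted ls \<and>
      char_poly (norm_lap N w) = (\<Prod>a\<leftarrow>ls. [:- a, 1:]))"

definition sub_bipartition :: "nat \<Rightarrow> nat \<Rightarrow> (nat \<Rightarrow> nat set) \<Rightarrow> (nat \<Rightarrow> nat set) \<Rightarrow> bool" where
  "sub_bipartition N k A B \<longleftrightarrow>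
     (\<forall>i<k. A i \<subseteq> {..<N} \<and> B i \<subseteq> {..<N} \<and> A i \<union> B i \<noteq> {} \<and> A i \<inter> B i = {}) \<and>
     (\<forall>i<k. \<forall>j<k. i \<noteq> j \<longrightarrow> (A i \<union> B i) \<inter> (A j \<union> B j) = {})"

definition rest_set :: "nat \<Rightarrow> nat \<Rightarrow> (nat \<Rightarrow> nat set) \<Rightarrow> (nat \<Rightarrow> nat set) \<Rightarrow> nat set" where
  "rest_set N k A B = {..<N} - (\<Union>i<k. A i \<union> B i)"

definition bip_ratio :: "nat \<Rightarrow> (nat \<Rightarrow> nat \<Rightarrow> real) \<Rightarrow> nat \<Rightarrow> (nat \<Rightarrow> nat set) \<Rightarrow> (nat \<Rightarrow> nat set) \<Rightarrow> nat \<Rightarrow> real" where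
  "bip_ratio N w k A B i =
     (2 * Ew w (A i) (B i) + (1/2) * Ew w (A i \<union> B i) (rest_set N k A B)) / vol N w (A i \<union> B i)"

definition hbar_star :: "nat \<Rightarrow> (nat \<Rightarrow> nat \<Rightarrow> real) \<Rightarrow> nat \<Rightarrow> real" where
  "hbar_star N w k = Max {Min (bip_ratio N w k A B ` {..<k}) | A B. sub_bipartition N k A B}"

end

theory Submission
  imports Defs "Jordan_Normal_Form.Schur_Decomposition"
begin

text \<open>The normalized Laplacian is similar to the symmetric matrix S = I - D^(-1/2) W D^(-1/2),
  which has real eigenvalues and an orthogonal eigenbasis (Gram--Schmidt applied to the invariant
  flag of a Schur decomposition). Fix a k-sub-bipartition attaining h*(k). Among the functions
  f = \<Sum>_i c_i (1_{V_{2i-1}} - 1_{V_{2i}}) there is a nonzero one with D^(1/2) f orthogonal to the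
  eigenvectors of the k - 1 largest eigenvalues (k unknowns, k - 1 linear equations), so its
  Rayleigh quotient is at most \<lambda>_{N-k+1}. That quotient is half the energy
  \<Sum>_{u,v} w_uv (f u - f v)^2 divided by \<Sum>_u d_u (f u)^2, and restricting the energy to the edges
  inside each pair and between each pair and V* shows that it is at least 2 h*(k).\<close>

section \<open>Real symmetric matrices\<close>

lemma sum_eq_single:
  assumes "finite S" "x \<in> S" "\<And>y. y \<in> S \<Longrightarrow> y \<noteq> x \<Longrightarrow> f y = 0"
  shows "sum f S = f x"
  using assms by (simp add: sum.remove sum.neutral)

lemma proots_prod_linear_factors: "proots (\<Prod>b\<leftarrow>xs. [:- b, 1:]) = mset (xs :: 'a::idom list)"
proof (induction xs)
  case (Cons b xs)
  have "(\<Prod>b\<leftarrow>xs. [:- b, 1:]) \<noteq> (0 :: 'a poly)"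
    by (auto simp: prod_list_zero_iff)
  moreover have "proots [:- b, 1:] = {#b#}"
    using proots_linear_factor[of "- b"] by simp
  ultimately show ?case
    using Cons by (simp add: proots_mult del: mult_pCons_left)
qed simp

lemma sorted_eq_if_prod_linear_factors_eq:
  fixes xs ys :: "'a::{idom,linorder} list"
  assumes "sorted xs" "sorted ys" "(\<Prod>b\<leftarrow>xs. [:- b, 1:]) = (\<Prod>b\<leftarrow>ys. [:- b, 1:])"
  shows "xs = ys"
proof -
  have "mset xs = mset ys"
    using assms(3) by (metis proots_prod_linear_factors)
  then show ?thesis
    using assms(1,2) by (metis properties_for_sort sorted_sort_id)
qed

lemma sym_real_mat_eigenvalue_real:
  fixes A :: "real mat" and v :: "complex vec" and a :: complex
  assumes A: "A \<in> carrier_mat n n"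
    and sym: "\<And>i j. i < n \<Longrightarrow> j < n \<Longrightarrow> A $$ (i,j) = A $$ (j,i)"
    and v: "v \<in> carrier_vec n" "v \<noteq> 0\<^sub>v n"
    and eigen: "map_mat complex_of_real A *\<^sub>v v = a \<cdot>\<^sub>v v"
  shows "a \<in> \<real>"
proof -
  have row: "(\<Sum>j<n. complex_of_real (A $$ (i,j)) * v $ j) = a * v $ i" if "i < n" for i
  proof -
    have "(map_mat complex_of_real A *\<^sub>v v) $ i = (a \<cdot>\<^sub>v v) $ i"
      using eigen by simp
    then show ?thesis
      using A v that by (simp add: scalar_prod_def lessThan_atLeast0 mult.commute)
  qed
  \<comment> \<open>\<open>T = v\<^sup>* A v = a |v|\<^sup>2\<close> equals its own conjugate, hence \<open>a\<close> is real.\<close>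
  define T where "T = (\<Sum>i<n. cnj (v $ i) * (\<Sum>j<n. complex_of_real (A $$ (i,j)) * v $ j))"
  define r where "r = (\<Sum>i<n. (cmod (v $ i))\<^sup>2)"
  have "T = a * (\<Sum>i<n. cnj (v $ i) * v $ i)"
    unfolding T_def by (simp add: row sum_distrib_left mult.left_commute)
  also have "(\<Sum>i<n. cnj (v $ i) * v $ i) = complex_of_real r"
    unfolding r_def of_real_sum by (rule sum.cong[OF refl]) (subst complex_norm_square, simp add: mult.commute)
  finally have T_eq: "T = a * complex_of_real r" .
  have "cnj T = (\<Sum>i<n. \<Sum>j<n. v $ i * (complex_of_real (A $$ (i,j)) * cnj (v $ j)))"
    unfolding T_def by (simp add: sum_distrib_left)
  also have "\<dots> = (\<Sum>j<n. \<Sum>i<n. v $ i * (complex_of_real (A $$ (i,j)) * cnj (v $ j)))"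
    by (rule sum.swap)
  also have "\<dots> = T"
    unfolding T_def by (auto simp: sum_distrib_left sym intro!: sum.cong)
  finally have T_real: "cnj T = T" .
  obtain i0 where i0: "i0 < n" "v $ i0 \<noteq> 0"
    using v by (metis eq_vecI carrier_vecD index_zero_vec)
  have "0 < (cmod (v $ i0))\<^sup>2"
    using i0 by simp
  also have "\<dots> \<le> r"
    unfolding r_def by (rule member_le_sum) (use i0 in auto)
  finally have "cnj a = a"
    using T_eq T_real by simp
  then show ?thesis
    by (metis Reals_cnj_iff)
qed

lemma sym_real_mat_char_poly_splits:
  fixes A :: "real mat"
  assumes A: "A \<in> carrier_mat n n"
    and sym: "\<And>i j. i < n \<Longrightarrow> j < n \<Longrightarrow> A $$ (i,j) = A $$ (j,i)"
  shows "\<exists>es. char_poly A = (\<Prod>e\<leftarrow>es. [:- e, 1:]) \<and> sorted es \<and> length es = n"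
proof -
  let ?AC = "map_mat complex_of_real A"
  have AC: "?AC \<in> carrier_mat n n"
    using A by simp
  obtain cs where cs: "char_poly ?AC = (\<Prod>a\<leftarrow>cs. [:- a, 1:])" and len: "length cs = n"
    using char_poly_factorized[OF AC] by blast
  have real: "a \<in> \<real>" if "a \<in> set cs" for a
  proof -
    have "poly (char_poly ?AC) a = 0"
      unfolding cs poly_prod_list using that by (auto simp: prod_list_zero_iff)
    then obtain v where "eigenvector ?AC v a"
      using eigenvalue_root_char_poly[OF AC] unfolding eigenvalue_def by blast
    then show ?thesis
      using A unfolding eigenvector_def by (auto intro: sym_real_mat_eigenvalue_real[OF A sym])
  qed
  define es where "es = map Re cs"
  have cs_es: "cs = map complex_of_real es"
    unfolding es_def map_map by (rule map_idI[symmetric]) (use real in \<open>auto simp: Reals_def\<close>)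
  interpret of_real_poly: map_poly_inj_idom_hom complex_of_real ..
  have "map_poly complex_of_real (char_poly A) = char_poly ?AC"
    by (rule of_real_hom.char_poly_hom[OF A, symmetric])
  also have "\<dots> = map_poly complex_of_real (\<Prod>e\<leftarrow>es. [:- e, 1:])"
    unfolding cs cs_es by (induction es) (simp_all add: of_real_poly.hom_mult del: mult_pCons_left)
  finally have "char_poly A = (\<Prod>e\<leftarrow>sort es. [:- e, 1:])"
    by (simp flip: prod_mset_prod_list)
  then show ?thesis
    using len es_def by (intro exI[of _ "sort es"]) auto
qed

text \<open>Vectors of \<open>\<real>\<^sup>n\<close> are functions \<open>nat \<Rightarrow> real\<close> of which only the coordinates below \<open>n\<close>
  matter, so equations between vectors are stated coordinatewise for \<open>i < n\<close>; families of vectors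
  are indexed as \<open>V r i\<close> (coordinate \<open>i\<close> of the \<open>r\<close>-th vector).\<close>

definition dot :: "nat \<Rightarrow> (nat \<Rightarrow> real) \<Rightarrow> (nat \<Rightarrow> real) \<Rightarrow> real" where
  "dot n x y = (\<Sum>i<n. x i * y i)"

definition mulv :: "nat \<Rightarrow> real mat \<Rightarrow> (nat \<Rightarrow> real) \<Rightarrow> nat \<Rightarrow> real" where
  "mulv n A x i = (\<Sum>l<n. A $$ (i,l) * x l)"

definition lspan :: "nat \<Rightarrow> (nat \<Rightarrow> nat \<Rightarrow> real) \<Rightarrow> nat \<Rightarrow> (nat \<Rightarrow> real) set" where
  "lspan n V J = {x. \<exists>c. \<forall>i<n. x i = (\<Sum>r<J. c r * V r i)}"

definition lin_indep :: "nat \<Rightarrow> (nat \<Rightarrow> nat \<Rightarrow> real) \<Rightarrow> nat \<Rightarrow> bool" where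
  "lin_indep n V J \<longleftrightarrow> (\<forall>c. (\<forall>i<n. (\<Sum>r<J. c r * V r i) = 0) \<longrightarrow> (\<forall>r<J. c r = 0))"

definition orthogonal_family :: "nat \<Rightarrow> (nat \<Rightarrow> nat \<Rightarrow> real) \<Rightarrow> nat \<Rightarrow> bool" where
  "orthogonal_family n W J \<longleftrightarrow>
     (\<forall>j<J. \<forall>l<J. j \<noteq> l \<longrightarrow> dot n (W j) (W l) = 0) \<and> (\<forall>j<J. dot n (W j) (W j) > 0)"

lemma dot_commute: "dot n x y = dot n y x"
  unfolding dot_def by (simp add: mult.commute)

lemma dot_cong_left: "(\<And>i. i < n \<Longrightarrow> x i = x' i) \<Longrightarrow> dot n x y = dot n x' y"
  unfolding dot_def by (auto intro!: sum.cong)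

lemma dot_diff_left: "dot n (\<lambda>i. x i - y i) z = dot n x z - dot n y z"
  unfolding dot_def by (simp add: left_diff_distrib sum_subtractf)

lemma dot_scale_left: "dot n (\<lambda>i. a * x i) y = a * dot n x y"
  unfolding dot_def by (simp add: sum_distrib_left mult.assoc)

lemma dot_sum_left: "dot n (\<lambda>i. \<Sum>r\<in>S. c r * V r i) y = (\<Sum>r\<in>S. c r * dot n (V r) y)"
  unfolding dot_def by (simp add: sum_distrib_left sum_distrib_right mult.assoc sum.swap[of _ S])

lemma dot_self_pos: "i < n \<Longrightarrow> x i \<noteq> 0 \<Longrightarrow> dot n x x > 0"
  unfolding dot_def by (rule sum_pos2[of _ i]) (auto simp: zero_less_mult_iff linorder_neq_iff)

lemma mulv_cong: "(\<And>l. l < n \<Longrightarrow> x l = y l) \<Longrightarrow> mulv n A x i = mulv n A y i"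
  unfolding mulv_def by simp

lemma mulv_diff: "mulv n A (\<lambda>l. x l - y l) i = mulv n A x i - mulv n A y i"
  unfolding mulv_def by (simp add: right_diff_distrib sum_subtractf)

lemma mulv_sum: "mulv n A (\<lambda>l. \<Sum>r\<in>S. c r * V r l) i = (\<Sum>r\<in>S. c r * mulv n A (V r) i)"
  unfolding mulv_def by (simp add: sum_distrib_left mult.left_commute sum.swap[of _ S])

lemma dot_mulv_sym:
  assumes "\<And>i j. i < n \<Longrightarrow> j < n \<Longrightarrow> A $$ (i,j) = A $$ (j,i)"
  shows "dot n (mulv n A x) y = dot n x (mulv n A y)"
proof -
  have "dot n (mulv n A x) y = (\<Sum>i<n. \<Sum>l<n. x l * (A $$ (l,i) * y i))"
    unfolding dot_def mulv_def sum_distrib_right by (auto simp: assms mult_ac intro!: sum.cong)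
  also have "\<dots> = dot n x (mulv n A y)"
    unfolding dot_def mulv_def by (subst sum.swap) (simp add: sum_distrib_left)
  finally show ?thesis .
qed

lemma lspan_cong: "x \<in> lspan n V J \<Longrightarrow> (\<And>i. i < n \<Longrightarrow> y i = x i) \<Longrightarrow> y \<in> lspan n V J"
  unfolding lspan_def by auto

lemma lspan_base: "r < J \<Longrightarrow> V r \<in> lspan n V J"
  unfolding lspan_def by (intro CollectI exI[of _ "\<lambda>s. of_bool (s = r)"]) simp

lemma lspan_zero: "(\<lambda>_. 0) \<in> lspan n V J"
  unfolding lspan_def by (intro CollectI exI[of _ "\<lambda>_. 0"]) simp

lemma lspan_add:
  assumes "x \<in> lspan n V J" "y \<in> lspan n V J"
  shows "(\<lambda>i. x i + y i) \<in> lspan n V J"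
proof -
  obtain c d where "\<forall>i<n. x i = (\<Sum>r<J. c r * V r i)" "\<forall>i<n. y i = (\<Sum>r<J. d r * V r i)"
    using assms unfolding lspan_def by blast
  then show ?thesis
    unfolding lspan_def by (intro CollectI exI[of _ "\<lambda>r. c r + d r"]) (simp add: distrib_right sum.distrib)
qed

lemma lspan_scale:
  assumes "x \<in> lspan n V J"
  shows "(\<lambda>i. a * x i) \<in> lspan n V J"
proof -
  obtain c where "\<forall>i<n. x i = (\<Sum>r<J. c r * V r i)"
    using assms unfolding lspan_def by blast
  then show ?thesis
    unfolding lspan_def by (intro CollectI exI[of _ "\<lambda>r. a * c r"]) (simp add: sum_distrib_left mult.assoc)
qed

lemma lspan_diff: "x \<in> lspan n V J \<Longrightarrow> y \<in> lspan n V J \<Longrightarrow> (\<lambda>i. x i - y i) \<in> lspan n V J"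
  using lspan_add[OF _ lspan_scale[of y n V J "-1"]] by simp

lemma lspan_sum:
  "finite S \<Longrightarrow> (\<And>r. r \<in> S \<Longrightarrow> U r \<in> lspan n V J) \<Longrightarrow> (\<lambda>i. \<Sum>r\<in>S. c r * U r i) \<in> lspan n V J"
  by (induction S rule: finite_induct) (simp_all add: lspan_zero lspan_add lspan_scale)

lemma lspan_subset: "(\<And>r. r < J \<Longrightarrow> U r \<in> lspan n V J') \<Longrightarrow> lspan n U J \<subseteq> lspan n V J'"
proof
  fix x assume U: "\<And>r. r < J \<Longrightarrow> U r \<in> lspan n V J'" and "x \<in> lspan n U J"
  then obtain c where "\<And>i. i < n \<Longrightarrow> x i = (\<Sum>r<J. c r * U r i)"
    unfolding lspan_def by blast
  moreover have "(\<lambda>i. \<Sum>r<J. c r * U r i) \<in> lspan n V J'"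
    using U by (intro lspan_sum) auto
  ultimately show "x \<in> lspan n V J'"
    by (rule lspan_cong[rotated])
qed

lemma lspan_mono: "J \<le> J' \<Longrightarrow> lspan n V J \<subseteq> lspan n V J'"
  by (intro lspan_subset lspan_base) simp

lemma lspan_cong_family: "(\<And>r. r < J \<Longrightarrow> U r = V r) \<Longrightarrow> lspan n U J = lspan n V J"
  unfolding lspan_def by simp

lemma dot_sum_orthogonal:
  assumes "orthogonal_family n W J" "j < J"
  shows "dot n (\<lambda>i. \<Sum>r<J. c r * W r i) (W j) = c j * dot n (W j) (W j)"
  unfolding dot_sum_left using assms by (intro sum_eq_single) (auto simp: orthogonal_family_def)

lemma orthogonal_to_lspan_eq_0:
  assumes W: "orthogonal_family n W J" and x: "x \<in> lspan n W J"
    and orth: "\<And>j. j < J \<Longrightarrow> dot n x (W j) = 0" and i: "i < n"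
  shows "x i = 0"
proof -
  obtain c where c: "\<And>i. i < n \<Longrightarrow> x i = (\<Sum>r<J. c r * W r i)"
    using x unfolding lspan_def by blast
  have "c j = 0" if "j < J" for j
  proof -
    have "c j * dot n (W j) (W j) = 0"
      using orth[OF that] dot_sum_orthogonal[OF W that, of c] dot_cong_left[OF c] by simp
    moreover have "dot n (W j) (W j) > 0"
      using W that unfolding orthogonal_family_def by blast
    ultimately show "c j = 0"
      by simp
  qed
  then show ?thesis
    using c[OF i] by simp
qed

lemma lin_indep_not_in_lspan:
  assumes indep: "lin_indep n V n" and J: "J < n" and y: "y \<in> lspan n V J"
  shows "\<exists>i<n. V J i \<noteq> y i"
proof (rule ccontr)
  assume "\<not> ?thesis"
  then have VJ: "\<And>i. i < n \<Longrightarrow> V J i = y i" by auto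
  obtain c where c: "\<And>i. i < n \<Longrightarrow> y i = (\<Sum>r<J. c r * V r i)"
    using y unfolding lspan_def by blast
  define d where "d r = (if r < J then c r else if r = J then -1 else 0)" for r
  have "(\<Sum>r<n. d r * V r i) = 0" if "i < n" for i
  proof -
    have "(\<Sum>r<n. d r * V r i) = (\<Sum>r<Suc J. d r * V r i)"
      using J by (intro sum.mono_neutral_right) (auto simp: d_def)
    also have "\<dots> = y i - V J i"
      using c[OF that] by (simp add: d_def)
    finally show ?thesis
      using VJ that by simp
  qed
  then have "d J = 0"
    using indep J unfolding lin_indep_def by blast
  then show False
    by (simp add: d_def)
qed

definition gs_residual :: "nat \<Rightarrow> (nat \<Rightarrow> nat \<Rightarrow> real) \<Rightarrow> nat \<Rightarrow> (nat \<Rightarrow> real) \<Rightarrow> nat \<Rightarrow> real" where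
  "gs_residual n W J x i = x i - (\<Sum>r<J. dot n x (W r) / dot n (W r) (W r) * W r i)"

lemma gs_residual_orthogonal:
  assumes W: "orthogonal_family n W J" and l: "l < J"
  shows "dot n (gs_residual n W J x) (W l) = 0"
proof -
  have "dot n (gs_residual n W J x) (W l)
      = dot n x (W l) - dot n (\<lambda>i. \<Sum>r<J. dot n x (W r) / dot n (W r) (W r) * W r i) (W l)"
    unfolding gs_residual_def[abs_def] by (rule dot_diff_left)
  also have "\<dots> = dot n x (W l) - dot n x (W l) / dot n (W l) (W l) * dot n (W l) (W l)"
    by (simp only: dot_sum_orthogonal[OF W l])
  moreover have "dot n (W l) (W l) > 0"
    using W l unfolding orthogonal_family_def by blast
  ultimately show ?thesis
    by simp
qed

lemma gs_residual_diff_in_lspan: "(\<lambda>i. x i - gs_residual n W J x i) \<in> lspan n W J"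
proof -
  have "(\<lambda>i. \<Sum>r<J. dot n x (W r) / dot n (W r) (W r) * W r i) \<in> lspan n W J"
    by (intro lspan_sum lspan_base) auto
  then show ?thesis
    unfolding gs_residual_def by simp
qed

lemma lspan_gs_residual_step:
  assumes span: "lspan n W J = lspan n p J"
  shows "lspan n (W(J := gs_residual n W J (p J))) (Suc J) = lspan n p (Suc J)"
proof
  let ?v = "gs_residual n W J (p J)" and ?W = "W(J := gs_residual n W J (p J))"
  have span': "lspan n ?W J = lspan n W J"
    by (rule lspan_cong_family) simp
  show "lspan n ?W (Suc J) \<subseteq> lspan n p (Suc J)"
  proof (rule lspan_subset)
    fix r assume "r < Suc J"
    moreover have "?v \<in> lspan n p (Suc J)"
    proof -
      have "(\<lambda>i. p J i - ?v i) \<in> lspan n p (Suc J)"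
        using gs_residual_diff_in_lspan[of "p J" n W J] span lspan_mono[of J "Suc J" n p] by auto
      then have "(\<lambda>i. p J i - (p J i - ?v i)) \<in> lspan n p (Suc J)"
        by (rule lspan_diff[OF lspan_base, rotated]) simp
      then show ?thesis
        by simp
    qed
    moreover have "W r \<in> lspan n p (Suc J)" if "r < J"
      using lspan_base[OF that, of W n] span lspan_mono[of J "Suc J" n p] by auto
    ultimately show "?W r \<in> lspan n p (Suc J)"
      by (auto simp: less_Suc_eq)
  qed
  show "lspan n p (Suc J) \<subseteq> lspan n ?W (Suc J)"
  proof (rule lspan_subset)
    fix r assume "r < Suc J"
    moreover have "p J \<in> lspan n ?W (Suc J)"
    proof -
      have "(\<lambda>i. p J i - ?v i) \<in> lspan n ?W (Suc J)"
        using gs_residual_diff_in_lspan[of "p J" n W J] span' lspan_mono[of J "Suc J" n ?W] by auto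
      then have "(\<lambda>i. ?W J i + (p J i - ?v i)) \<in> lspan n ?W (Suc J)"
        by (rule lspan_add[OF lspan_base, rotated]) simp
      then show ?thesis
        by simp
    qed
    moreover have "p r \<in> lspan n ?W (Suc J)" if "r < J"
      using lspan_base[OF that, of p n] span span' lspan_mono[of J "Suc J" n ?W] by auto
    ultimately show "p r \<in> lspan n ?W (Suc J)"
      by (auto simp: less_Suc_eq)
  qed
qed

definition eigenflag :: "nat \<Rightarrow> real mat \<Rightarrow> real mat \<Rightarrow> (nat \<Rightarrow> nat \<Rightarrow> real) \<Rightarrow> nat \<Rightarrow> (nat \<Rightarrow> nat \<Rightarrow> real) \<Rightarrow> bool" where
  "eigenflag n A B p J W \<longleftrightarrow> orthogonal_family n W J \<and>
     (\<forall>j<J. \<forall>i<n. mulv n A (W j) i = B $$ (j,j) * W j i) \<and> lspan n W J = lspan n p J"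

context
  fixes n :: nat and A B :: "real mat" and p :: "nat \<Rightarrow> nat \<Rightarrow> real"
  assumes sym: "\<And>i j. i < n \<Longrightarrow> j < n \<Longrightarrow> A $$ (i,j) = A $$ (j,i)"
    and triangular: "\<And>m i. m < n \<Longrightarrow> i < n \<Longrightarrow> mulv n A (p m) i = (\<Sum>r\<le>m. B $$ (r,m) * p r i)"
    and indep: "lin_indep n p n"
begin

lemma eigenflag_residual_nonzero:
  assumes flag: "eigenflag n A B p J W" and J: "J < n"
  shows "dot n (gs_residual n W J (p J)) (gs_residual n W J (p J)) > 0"
proof -
  have "(\<lambda>i. p J i - gs_residual n W J (p J) i) \<in> lspan n p J"
    using gs_residual_diff_in_lspan flag unfolding eigenflag_def by blast
  then obtain i where "i < n" "gs_residual n W J (p J) i \<noteq> 0"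
    using lin_indep_not_in_lspan[OF indep J] by fastforce
  then show ?thesis
    by (rule dot_self_pos)
qed

text \<open>The residual \<open>v\<close> of \<open>p J\<close> is an eigenvector: \<open>A v - B\<^sub>J\<^sub>J v\<close> lies in the span of the
  previous eigenvectors (because \<open>B\<close> is triangular) and is orthogonal to all of them
  (because \<open>A\<close> is symmetric), hence vanishes.\<close>

lemma eigenflag_residual_defect_in_lspan:
  assumes flag: "eigenflag n A B p J W" and J: "J < n"
  shows "(\<lambda>i. mulv n A (gs_residual n W J (p J)) i - B $$ (J,J) * gs_residual n W J (p J) i) \<in> lspan n W J"
proof -
  define co where "co r = dot n (p J) (W r) / dot n (W r) (W r)" for r
  have eig: "\<And>j i. j < J \<Longrightarrow> i < n \<Longrightarrow> mulv n A (W j) i = B $$ (j,j) * W j i"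
    and span: "lspan n W J = lspan n p J"
    using flag unfolding eigenflag_def by auto
  have v: "gs_residual n W J (p J) i = p J i - (\<Sum>r<J. co r * W r i)" for i
    unfolding gs_residual_def co_def ..
  have "mulv n A (gs_residual n W J (p J)) i - B $$ (J,J) * gs_residual n W J (p J) i
      = (\<Sum>r<J. B $$ (r,J) * p r i) + (\<Sum>r<J. (co r * (B $$ (J,J) - B $$ (r,r))) * W r i)"
    if i: "i < n" for i
  proof -
    have "mulv n A (gs_residual n W J (p J)) i = mulv n A (p J) i - (\<Sum>r<J. co r * mulv n A (W r) i)"
      unfolding v[abs_def] by (simp only: mulv_diff mulv_sum)
    also have "\<dots> = (\<Sum>r<J. B $$ (r,J) * p r i) + B $$ (J,J) * p J i - (\<Sum>r<J. co r * B $$ (r,r) * W r i)"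
      using J i by (simp add: triangular eig lessThan_Suc_atMost[symmetric] mult.assoc)
    moreover have "(\<Sum>r<J. (co r * (B $$ (J,J) - B $$ (r,r))) * W r i)
        = B $$ (J,J) * (\<Sum>r<J. co r * W r i) - (\<Sum>r<J. co r * B $$ (r,r) * W r i)"
      by (simp add: algebra_simps sum_distrib_left sum_subtractf)
    ultimately show ?thesis
      unfolding v by (simp add: algebra_simps)
  qed
  moreover have "(\<lambda>i. \<Sum>r<J. B $$ (r,J) * p r i) \<in> lspan n W J"
    unfolding span by (intro lspan_sum lspan_base) auto
  moreover have "(\<lambda>i. \<Sum>r<J. (co r * (B $$ (J,J) - B $$ (r,r))) * W r i) \<in> lspan n W J"
    by (intro lspan_sum lspan_base) auto
  ultimately show ?thesis
    by (blast intro: lspan_cong lspan_add)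
qed

lemma eigenflag_residual_eigen:
  assumes flag: "eigenflag n A B p J W" and J: "J < n" and i: "i < n"
  shows "mulv n A (gs_residual n W J (p J)) i = B $$ (J,J) * gs_residual n W J (p J) i"
proof -
  let ?v = "gs_residual n W J (p J)"
  have orth: "orthogonal_family n W J" and eig: "\<And>j i. j < J \<Longrightarrow> i < n \<Longrightarrow> mulv n A (W j) i = B $$ (j,j) * W j i"
    using flag unfolding eigenflag_def by auto
  have "dot n (\<lambda>i. mulv n A ?v i - B $$ (J,J) * ?v i) (W l) = 0" if l: "l < J" for l
  proof -
    have "dot n (mulv n A ?v) (W l) = dot n ?v (mulv n A (W l))"
      by (rule dot_mulv_sym[OF sym])
    also have "\<dots> = B $$ (l,l) * dot n ?v (W l)"
      unfolding dot_def using eig[OF l] by (simp add: sum_distrib_left mult_ac)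
    also have "\<dots> = 0"
      using gs_residual_orthogonal[OF orth l] by simp
    finally show ?thesis
      using gs_residual_orthogonal[OF orth l] by (simp add: dot_diff_left dot_scale_left)
  qed
  then have "mulv n A ?v i - B $$ (J,J) * ?v i = 0"
    using orthogonal_to_lspan_eq_0[OF orth eigenflag_residual_defect_in_lspan[OF flag J] _ i] by blast
  then show ?thesis
    by simp
qed

lemma eigenflag_step:
  assumes flag: "eigenflag n A B p J W" and J: "J < n"
  shows "eigenflag n A B p (Suc J) (W(J := gs_residual n W J (p J)))"
proof -
  have orth: "orthogonal_family n W J" and eig: "\<forall>j<J. \<forall>i<n. mulv n A (W j) i = B $$ (j,j) * W j i"
    and span: "lspan n W J = lspan n p J"
    using flag unfolding eigenflag_def by auto
  have "orthogonal_family n (W(J := gs_residual n W J (p J))) (Suc J)"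
    using orth gs_residual_orthogonal[OF orth] eigenflag_residual_nonzero[OF flag J]
    unfolding orthogonal_family_def by (auto simp: less_Suc_eq dot_commute)
  moreover have "\<forall>j<Suc J. \<forall>i<n. mulv n A ((W(J := gs_residual n W J (p J))) j) i
      = B $$ (j,j) * (W(J := gs_residual n W J (p J))) j i"
    using eig eigenflag_residual_eigen[OF flag J] by (auto simp: less_Suc_eq)
  ultimately show ?thesis
    using lspan_gs_residual_step[OF span] unfolding eigenflag_def by blast
qed

lemma eigenflag_exists: "J \<le> n \<Longrightarrow> \<exists>W. eigenflag n A B p J W"
proof (induction J)
  case 0
  show ?case
    by (intro exI[of _ p]) (simp add: eigenflag_def orthogonal_family_def)
next
  case (Suc J)
  then show ?case
    using eigenflag_step by (meson Suc_le_lessD less_imp_le_nat)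
qed

end

lemma index_mult_mat_sum:
  fixes M M' :: "'a::comm_semiring_1 mat"
  assumes "M \<in> carrier_mat n n" "M' \<in> carrier_mat n n" "i < n" "j < n"
  shows "(M * M') $$ (i,j) = (\<Sum>l<n. M $$ (i,l) * M' $$ (l,j))"
  using assms by (simp add: scalar_prod_def lessThan_atLeast0)

lemma mat_cols_lin_indep:
  fixes P Q :: "real mat"
  assumes P: "P \<in> carrier_mat n n" and Q: "Q \<in> carrier_mat n n" and QP: "Q * P = 1\<^sub>m n"
  shows "lin_indep n (\<lambda>r i. P $$ (i,r)) n"
  unfolding lin_indep_def
proof (intro allI impI)
  fix c r assume zero: "\<forall>i<n. (\<Sum>s<n. c s * P $$ (i,s)) = 0" and r: "r < n"
  have "c r = (\<Sum>s<n. (Q * P) $$ (r,s) * c s)"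
    using QP r by (subst sum_eq_single[of _ r]) auto
  also have "\<dots> = (\<Sum>s<n. \<Sum>i<n. Q $$ (r,i) * (c s * P $$ (i,s)))"
    using Q P r by (simp add: index_mult_mat_sum sum_distrib_left mult_ac del: index_mult_mat)
  also have "\<dots> = (\<Sum>i<n. Q $$ (r,i) * (\<Sum>s<n. c s * P $$ (i,s)))"
    by (subst sum.swap) (simp add: sum_distrib_left)
  finally show "c r = 0"
    using zero by simp
qed

lemma mat_cols_lspan:
  fixes P Q :: "real mat"
  assumes P: "P \<in> carrier_mat n n" and Q: "Q \<in> carrier_mat n n" and PQ: "P * Q = 1\<^sub>m n"
  shows "lspan n (\<lambda>r i. P $$ (i,r)) n = UNIV"
proof -
  have "x \<in> lspan n (\<lambda>r i. P $$ (i,r)) n" for x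
  proof -
    have coords: "x i = (\<Sum>r<n. (\<Sum>l<n. Q $$ (r,l) * x l) * P $$ (i,r))" if "i < n" for i
    proof -
      have "x i = (\<Sum>l<n. (P * Q) $$ (i,l) * x l)"
        using PQ that by (subst sum_eq_single[of _ i]) auto
      also have "\<dots> = (\<Sum>l<n. \<Sum>r<n. Q $$ (r,l) * x l * P $$ (i,r))"
        using P Q that by (simp add: index_mult_mat_sum sum_distrib_left sum_distrib_right mult_ac
            del: index_mult_mat)
      also have "\<dots> = (\<Sum>r<n. (\<Sum>l<n. Q $$ (r,l) * x l) * P $$ (i,r))"
        by (subst sum.swap) (simp add: sum_distrib_right)
      finally show ?thesis .
    qed
    show ?thesis
      unfolding lspan_def by (intro CollectI exI[of _ "\<lambda>r. \<Sum>l<n. Q $$ (r,l) * x l"] allI impI coords)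
  qed
  then show ?thesis
    by blast
qed

lemma mulv_col_upper_triangular:
  fixes A B P :: "real mat"
  assumes A: "A \<in> carrier_mat n n" and B: "B \<in> carrier_mat n n" and P: "P \<in> carrier_mat n n"
    and AP: "A * P = P * B" and ut: "upper_triangular B" and m: "m < n" and i: "i < n"
  shows "mulv n A (\<lambda>i. P $$ (i,m)) i = (\<Sum>r\<le>m. B $$ (r,m) * P $$ (i,r))"
proof -
  have "mulv n A (\<lambda>i. P $$ (i,m)) i = (\<Sum>r<n. P $$ (i,r) * B $$ (r,m))"
    using index_mult_mat_sum[OF A P i m] index_mult_mat_sum[OF P B i m] AP by (simp add: mulv_def)
  also have "\<dots> = (\<Sum>r\<le>m. P $$ (i,r) * B $$ (r,m))"
    using ut B m unfolding upper_triangular_def by (intro sum.mono_neutral_right) auto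
  finally show ?thesis
    by (simp add: mult.commute)
qed

text \<open>Orthogonalising the columns of the Schur basis turns its invariant flag into an orthogonal
  eigenbasis; no normalisation (hence no square roots) is needed.\<close>

lemma sym_mat_orthogonal_eigenbasis:
  fixes A :: "real mat"
  assumes A: "A \<in> carrier_mat n n"
    and sym: "\<And>i j. i < n \<Longrightarrow> j < n \<Longrightarrow> A $$ (i,j) = A $$ (j,i)"
    and cp: "char_poly A = (\<Prod>e\<leftarrow>es. [:- e, 1:])"
  shows "\<exists>W. orthogonal_family n W n \<and> (\<forall>j<n. \<forall>i<n. mulv n A (W j) i = es ! j * W j i)
    \<and> lspan n W n = UNIV"
proof -
  obtain B P Q where "schur_decomposition A es = (B, P, Q)"
    by (cases "schur_decomposition A es") auto
  then have sim: "similar_mat_wit A B P Q" and ut: "upper_triangular B" and diag: "diag_mat B = es"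
    using schur_decomposition[OF A cp] by auto
  have B: "B \<in> carrier_mat n n" and P: "P \<in> carrier_mat n n" and Q: "Q \<in> carrier_mat n n"
    and PQ: "P * Q = 1\<^sub>m n" and QP: "Q * P = 1\<^sub>m n" and APBQ: "A = P * B * Q"
    using sim A unfolding similar_mat_wit_def Let_def by auto
  have "A * P = P * B * (Q * P)"
    using APBQ P B Q by (simp add: assoc_mult_mat[of _ n n _ n _ n])
  then have AP: "A * P = P * B"
    using P B QP by simp
  obtain W where W: "eigenflag n A B (\<lambda>r i. P $$ (i,r)) n W"
    using eigenflag_exists[where p = "\<lambda>r i. P $$ (i,r)" and J = n,
        OF sym mulv_col_upper_triangular[OF A B P AP ut] mat_cols_lin_indep[OF P Q QP] order.refl]
    by blast
  have "B $$ (j,j) = es ! j" if "j < n" for j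
    using diag B that unfolding diag_mat_def by auto
  then show ?thesis
    using W mat_cols_lspan[OF P Q PQ] unfolding eigenflag_def by (intro exI[of _ W]) auto
qed

lemma rayleigh_le_if_orthogonal_to_top:
  assumes W: "orthogonal_family n W n" and eig: "\<And>j i. j < n \<Longrightarrow> i < n \<Longrightarrow> mulv n A (W j) i = e j * W j i"
    and x: "x \<in> lspan n W n" and top: "\<And>j. m \<le> j \<Longrightarrow> j < n \<Longrightarrow> dot n x (W j) = 0"
    and bottom: "\<And>j. j < m \<Longrightarrow> e j \<le> \<mu>"
  shows "dot n x (mulv n A x) \<le> \<mu> * dot n x x"
proof -
  obtain z where z: "\<And>i. i < n \<Longrightarrow> x i = (\<Sum>j<n. z j * W j i)"
    using x unfolding lspan_def by blast
  have coeff: "dot n x (W j) = z j * dot n (W j) (W j)" if "j < n" for j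
    using dot_sum_orthogonal[OF W that] dot_cong_left[OF z] by simp
  have Ax: "mulv n A x i = (\<Sum>j<n. (z j * e j) * W j i)" if "i < n" for i
    using that by (simp add: mulv_cong[OF z] mulv_sum eig mult.assoc)
  have "dot n x (mulv n A x) = dot n (mulv n A x) x"
    by (rule dot_commute)
  also have "\<dots> = (\<Sum>j<n. (z j * e j) * dot n (W j) x)"
    by (simp only: dot_cong_left[OF Ax] dot_sum_left)
  also have "\<dots> = (\<Sum>j<n. e j * (z j * dot n x (W j)))"
    by (simp add: dot_commute mult_ac)
  also have "\<dots> \<le> (\<Sum>j<n. \<mu> * (z j * dot n x (W j)))"
  proof (rule sum_mono)
    fix j assume j: "j \<in> {..<n}"
    show "e j * (z j * dot n x (W j)) \<le> \<mu> * (z j * dot n x (W j))"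
    proof (cases "j < m")
      case True
      have "dot n (W j) (W j) \<ge> 0"
        using W j unfolding orthogonal_family_def by (simp add: less_imp_le)
      then have "0 \<le> z j * dot n x (W j)"
        using coeff j by (simp add: mult.assoc[symmetric])
      then show ?thesis
        using bottom[OF True] by (rule mult_right_mono[rotated])
    qed (use j top in simp)
  qed
  also have "\<dots> = \<mu> * dot n (\<lambda>i. \<Sum>j<n. z j * W j i) x"
    by (simp add: dot_sum_left dot_commute sum_distrib_left)
  also have "\<dots> = \<mu> * dot n x x"
    by (simp only: dot_cong_left[OF z])
  finally show ?thesis .
qed

lemma exists_nonzero_solution:
  fixes a :: "nat \<Rightarrow> nat \<Rightarrow> real"
  assumes "finite I" "m < card I"
  shows "\<exists>c. (\<exists>i\<in>I. c i \<noteq> 0) \<and> (\<forall>r<m. (\<Sum>i\<in>I. a r i * c i) = 0)"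
  using assms
proof (induction m arbitrary: I a)
  case 0
  then obtain i0 where "i0 \<in> I"
    by fastforce
  then show ?case
    by (intro exI[of _ "\<lambda>i. of_bool (i = i0)"]) auto
next
  case (Suc m)
  show ?case
  proof (cases "\<forall>i\<in>I. a m i = 0")
    case True
    obtain c where c: "\<exists>i\<in>I. c i \<noteq> 0" "\<forall>r<m. (\<Sum>i\<in>I. a r i * c i) = 0"
      using Suc.IH[of I a] Suc.prems by auto
    then show ?thesis
      using True by (auto simp: less_Suc_eq)
  next
    case False
    \<comment> \<open>Eliminate the unknown \<open>c i0\<close> using equation \<open>m\<close>, then recurse on the other unknowns.\<close>
    then obtain i0 where i0: "i0 \<in> I" "a m i0 \<noteq> 0"
      by blast
    define I' where "I' = I - {i0}"
    define a' where "a' r i = a r i - a r i0 * a m i / a m i0" for r i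
    obtain c' where c': "\<exists>i\<in>I'. c' i \<noteq> 0" "\<forall>r<m. (\<Sum>i\<in>I'. a' r i * c' i) = 0"
      using Suc.IH[of I' a'] Suc.prems i0 unfolding I'_def by fastforce
    define c where "c i = (if i = i0 then - (\<Sum>i\<in>I'. a m i * c' i) / a m i0 else c' i)" for i
    have split: "(\<Sum>i\<in>I. a r i * c i) = a r i0 * c i0 + (\<Sum>i\<in>I'. a r i * c' i)" for r
      using Suc.prems i0 unfolding I'_def c_def by (simp add: sum.remove)
    have "(\<Sum>i\<in>I. a r i * c i) = 0" if r: "r < Suc m" for r
    proof (cases "r = m")
      case True
      then show ?thesis
        using split[of m] i0 by (simp add: c_def)
    next
      case False
      have "(\<Sum>i\<in>I'. a' r i * c' i)
          = (\<Sum>i\<in>I'. a r i * c' i) - a r i0 / a m i0 * (\<Sum>i\<in>I'. a m i * c' i)"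
        unfolding a'_def sum_distrib_left sum_subtractf[symmetric] by (rule sum.cong) (simp_all add: algebra_simps)
      then show ?thesis
        using split[of r] c'(2) False r i0 by (simp add: c_def algebra_simps)
    qed
    moreover have "\<exists>i\<in>I. c i \<noteq> 0"
      using c'(1) unfolding c_def I'_def by auto
    ultimately show ?thesis
      by blast
  qed
qed

lemma exists_sum_orthogonal:
  fixes k m :: nat
  assumes "m < k"
  shows "\<exists>c. (\<exists>i<k. c i \<noteq> 0) \<and> (\<forall>r<m. dot n (\<lambda>u. \<Sum>i<k. c i * g i u) (V r) = 0)"
  using exists_nonzero_solution[of "{..<k}" m "\<lambda>r i. dot n (g i) (V r)"] assms
  by (auto simp: dot_sum_left mult.commute)

section \<open>The symmetric normalized Laplacian\<close>

definition sym_norm_lap :: "nat \<Rightarrow> (nat \<Rightarrow> nat \<Rightarrow> real) \<Rightarrow> real mat" where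
  "sym_norm_lap N w = mat N N (\<lambda>(i,j). of_bool (i = j) - w i j / sqrt (deg N w i * deg N w j))"

definition deg_sqrt_scale :: "nat \<Rightarrow> (nat \<Rightarrow> nat \<Rightarrow> real) \<Rightarrow> (nat \<Rightarrow> real) \<Rightarrow> nat \<Rightarrow> real" where
  "deg_sqrt_scale N w f u = sqrt (deg N w u) * f u"

lemma sym_norm_lap_index:
  "i < N \<Longrightarrow> j < N \<Longrightarrow>
    sym_norm_lap N w $$ (i,j) = of_bool (i = j) - w i j / (sqrt (deg N w i) * sqrt (deg N w j))"
  unfolding sym_norm_lap_def by (simp add: real_sqrt_mult)

lemma sym_norm_lap_sym:
  assumes "\<And>u v. u < N \<Longrightarrow> v < N \<Longrightarrow> w u v = w v u" "i < N" "j < N"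
  shows "sym_norm_lap N w $$ (i,j) = sym_norm_lap N w $$ (j,i)"
  using assms by (simp add: sym_norm_lap_index mult.commute)

lemma similar_norm_lap_sym_norm_lap:
  assumes noloop: "\<And>u. u < N \<Longrightarrow> w u u = 0" and degpos: "\<And>u. u < N \<Longrightarrow> deg N w u > 0"
  shows "similar_mat (norm_lap N w) (sym_norm_lap N w)"
proof -
  let ?S = "sym_norm_lap N w"
  define Dm where "Dm = mat_diag N (\<lambda>i. 1 / sqrt (deg N w i))"
  define Dp where "Dp = mat_diag N (\<lambda>i. sqrt (deg N w i))"
  have S: "?S \<in> carrier_mat N N" and L: "norm_lap N w \<in> carrier_mat N N"
    and D: "Dm \<in> carrier_mat N N" "Dp \<in> carrier_mat N N"
    by (simp_all add: sym_norm_lap_def norm_lap_def Dm_def Dp_def)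
  have "deg N w u \<noteq> 0" if "u < N" for u
    using degpos[OF that] by simp
  then have inv: "Dm * Dp = 1\<^sub>m N" "Dp * Dm = 1\<^sub>m N"
    unfolding Dm_def Dp_def mat_diag_diag by (auto intro!: eq_matI simp: mat_diag_def)
  have "Dm * ?S * Dp = mat N N (\<lambda>(i,j). 1 / sqrt (deg N w i) * ?S $$ (i,j) * sqrt (deg N w j))"
    unfolding Dm_def Dp_def using S
    by (subst mat_diag_mult_left[of _ N N], simp, subst mat_diag_mult_right[of _ N N]) (auto intro!: eq_matI)
  also have "\<dots> = norm_lap N w"
  proof (rule eq_matI)
    fix i j assume "i < dim_row (norm_lap N w)" "j < dim_col (norm_lap N w)"
    then have ij: "i < N" "j < N"
      by (auto simp: norm_lap_def)
    have "sqrt (deg N w i) * sqrt (deg N w i) = deg N w i" "sqrt (deg N w j) > 0"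
      using degpos ij by (auto simp: less_imp_le)
    then show "mat N N (\<lambda>(i,j). 1 / sqrt (deg N w i) * ?S $$ (i,j) * sqrt (deg N w j)) $$ (i,j)
        = norm_lap N w $$ (i,j)"
      using ij noloop by (cases "i = j") (auto simp: sym_norm_lap_index norm_lap_def field_simps)
  qed (auto simp: norm_lap_def)
  finally have "similar_mat_wit (norm_lap N w) ?S Dm Dp"
    unfolding similar_mat_wit_def Let_def using L S D inv by (auto simp: norm_lap_def)
  then show ?thesis
    unfolding similar_mat_def by blast
qed

lemma lap_eigs_sym_norm_lap:
  assumes sym: "\<And>u v. u < N \<Longrightarrow> v < N \<Longrightarrow> w u v = w v u"
    and noloop: "\<And>u. u < N \<Longrightarrow> w u u = 0" and degpos: "\<And>u. u < N \<Longrightarrow> deg N w u > 0"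
  shows "length (lap_eigs N w) = N \<and> sorted (lap_eigs N w)
    \<and> char_poly (sym_norm_lap N w) = (\<Prod>e\<leftarrow>lap_eigs N w. [:- e, 1:])"
proof -
  have cp: "char_poly (norm_lap N w) = char_poly (sym_norm_lap N w)"
    by (rule char_poly_similar[OF similar_norm_lap_sym_norm_lap[OF noloop degpos]])
  have S: "sym_norm_lap N w \<in> carrier_mat N N"
    by (simp add: sym_norm_lap_def)
  obtain es where es: "char_poly (sym_norm_lap N w) = (\<Prod>e\<leftarrow>es. [:- e, 1:])" "sorted es" "length es = N"
    using sym_real_mat_char_poly_splits[OF S sym_norm_lap_sym[OF sym]] by blast
  have "\<exists>!es. length es = N \<and> sorted es \<and> char_poly (norm_lap N w) = (\<Prod>e\<leftarrow>es. [:- e, 1:])"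
    using es cp sorted_eq_if_prod_linear_factors_eq by (intro ex1I[of _ es]) auto
  from theI'[OF this] show ?thesis
    using cp unfolding lap_eigs_def by simp
qed

lemma lap_eigs_orthogonal_eigenbasis:
  assumes sym: "\<And>u v. u < N \<Longrightarrow> v < N \<Longrightarrow> w u v = w v u"
    and noloop: "\<And>u. u < N \<Longrightarrow> w u u = 0" and degpos: "\<And>u. u < N \<Longrightarrow> deg N w u > 0"
  shows "\<exists>W. orthogonal_family N W N
    \<and> (\<forall>j<N. \<forall>i<N. mulv N (sym_norm_lap N w) (W j) i = lap_eigs N w ! j * W j i) \<and> lspan N W N = UNIV"
proof -
  have S: "sym_norm_lap N w \<in> carrier_mat N N"
    by (simp add: sym_norm_lap_def)
  have cp: "char_poly (sym_norm_lap N w) = (\<Prod>e\<leftarrow>lap_eigs N w. [:- e, 1:])"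
    using lap_eigs_sym_norm_lap[OF sym noloop degpos] by blast
  show ?thesis
    using sym_mat_orthogonal_eigenbasis[OF S sym_norm_lap_sym[OF sym] cp] by blast
qed

lemma dot_deg_sqrt_scale:
  assumes "\<And>u. u < N \<Longrightarrow> deg N w u > 0"
  shows "dot N (deg_sqrt_scale N w f) (deg_sqrt_scale N w f) = (\<Sum>u<N. deg N w u * (f u)\<^sup>2)"
  unfolding dot_def deg_sqrt_scale_def using assms
  by (intro sum.cong) (auto simp: power2_eq_square mult_ac less_imp_le)

lemma sym_norm_lap_quadratic_form:
  assumes sym: "\<And>u v. u < N \<Longrightarrow> v < N \<Longrightarrow> w u v = w v u"
    and noloop: "\<And>u. u < N \<Longrightarrow> w u u = 0" and degpos: "\<And>u. u < N \<Longrightarrow> deg N w u > 0"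
  shows "2 * dot N (deg_sqrt_scale N w f) (mulv N (sym_norm_lap N w) (deg_sqrt_scale N w f))
    = (\<Sum>u<N. \<Sum>l<N. w u l * (f u - f l)\<^sup>2)"
proof -
  let ?x = "deg_sqrt_scale N w f" and ?d = "deg N w"
  have entry: "?x u * (sym_norm_lap N w $$ (u,l) * ?x l) = (if u = l then ?d u * (f u)\<^sup>2 else 0) - w u l * f u * f l"
    if "u < N" "l < N" for u l
  proof -
    have "sqrt (?d u) > 0" "sqrt (?d l) > 0" "sqrt (?d u) * sqrt (?d u) = ?d u"
      using degpos that by (auto simp: less_imp_le)
    then show ?thesis
      using that noloop by (auto simp: deg_sqrt_scale_def sym_norm_lap_index field_simps power2_eq_square)
  qed
  have "dot N ?x (mulv N (sym_norm_lap N w) ?x)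
      = (\<Sum>u<N. \<Sum>l<N. (if u = l then ?d u * (f u)\<^sup>2 else 0) - w u l * f u * f l)"
    unfolding dot_def mulv_def sum_distrib_left by (intro sum.cong refl) (simp add: entry)
  also have "\<dots> = (\<Sum>u<N. ?d u * (f u)\<^sup>2) - (\<Sum>u<N. \<Sum>l<N. w u l * f u * f l)"
    by (simp add: sum_subtractf sum.delta)
  finally have form: "dot N ?x (mulv N (sym_norm_lap N w) ?x) = \<dots>" .
  have left: "(\<Sum>u<N. \<Sum>l<N. w u l * (f u)\<^sup>2) = (\<Sum>u<N. ?d u * (f u)\<^sup>2)"
    unfolding deg_def by (simp add: sum_distrib_right)
  have "(\<Sum>u<N. \<Sum>l<N. w u l * (f l)\<^sup>2) = (\<Sum>l<N. \<Sum>u<N. w l u * (f l)\<^sup>2)"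
    by (subst sum.swap) (auto intro!: sum.cong simp: sym)
  then have right: "(\<Sum>u<N. \<Sum>l<N. w u l * (f l)\<^sup>2) = (\<Sum>u<N. ?d u * (f u)\<^sup>2)"
    using left by simp
  have "(\<Sum>u<N. \<Sum>l<N. w u l * (f u - f l)\<^sup>2) = (\<Sum>u<N. \<Sum>l<N. w u l * (f u)\<^sup>2)
      + (\<Sum>u<N. \<Sum>l<N. w u l * (f l)\<^sup>2) - 2 * (\<Sum>u<N. \<Sum>l<N. w u l * f u * f l)"
    by (simp add: power2_diff algebra_simps sum.distrib sum_subtractf sum_distrib_left)
  then show ?thesis
    using form left right by simp
qed

section \<open>Test functions of a sub-bipartition\<close>

lemma Ew_sym:
  assumes "\<And>u v. u < N \<Longrightarrow> v < N \<Longrightarrow> w u v = w v u" "X \<subseteq> {..<N}" "Y \<subseteq> {..<N}"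
  shows "Ew w X Y = Ew w Y X"
  unfolding Ew_def using assms by (subst sum.swap) (auto intro!: sum.cong)

lemma sum_product_eq_Ew:
  assumes "\<And>u l. u \<in> X \<Longrightarrow> l \<in> Y \<Longrightarrow> g (u,l) = K * w u l"
  shows "sum g (X \<times> Y) = K * Ew w X Y"
  unfolding Ew_def sum_distrib_left sum.cartesian_product' using assms by simp

lemma sum_of_bool_mem:
  fixes g :: "nat \<Rightarrow> real"
  assumes "S \<subseteq> {..<N}"
  shows "(\<Sum>u<N. g u * of_bool (u \<in> S)) = sum g S"
proof -
  have "(\<Sum>u<N. g u * of_bool (u \<in> S)) = (\<Sum>u\<in>S. g u * of_bool (u \<in> S))"
    using assms by (intro sum.mono_neutral_right) auto
  then show ?thesis
    by simp
qed

lemma hbar_star_attained: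
  assumes "k \<le> N"
  shows "\<exists>A B. sub_bipartition N k A B \<and> hbar_star N w k = Min (bip_ratio N w k A B ` {..<k})"
proof -
  define S where "S = {Min (bip_ratio N w k A B ` {..<k}) | A B. sub_bipartition N k A B}"
  define X where "X = PiE {..<k} (\<lambda>_. Pow {..<N})"
  \<comment> \<open>Only the first \<open>k\<close> sets of each family matter, so the candidates range over a finite set.\<close>
  have "S \<subseteq> (\<lambda>(A,B). Min (bip_ratio N w k A B ` {..<k})) ` (X \<times> X)"
  proof
    fix s assume "s \<in> S"
    then obtain A B where sb: "sub_bipartition N k A B" and s: "s = Min (bip_ratio N w k A B ` {..<k})"
      unfolding S_def by blast
    have "rest_set N k (restrict A {..<k}) (restrict B {..<k}) = rest_set N k A B"
      unfolding rest_set_def by auto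
    then have "bip_ratio N w k (restrict A {..<k}) (restrict B {..<k}) ` {..<k} = bip_ratio N w k A B ` {..<k}"
      unfolding bip_ratio_def by (intro image_cong) auto
    moreover have "restrict A {..<k} \<in> X" "restrict B {..<k} \<in> X"
      using sb unfolding X_def sub_bipartition_def by auto
    ultimately show "s \<in> (\<lambda>(A,B). Min (bip_ratio N w k A B ` {..<k})) ` (X \<times> X)"
      using s by (intro image_eqI[of _ _ "(restrict A {..<k}, restrict B {..<k})"]) auto
  qed
  moreover have "finite X"
    unfolding X_def by (intro finite_PiE) auto
  ultimately have "finite S"
    by (meson finite_SigmaI finite_imageI finite_subset)
  moreover have "sub_bipartition N k (\<lambda>i. {i}) (\<lambda>i. {})"
    using assms unfolding sub_bipartition_def by auto
  then have "S \<noteq> {}"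
    unfolding S_def by blast
  ultimately have "hbar_star N w k \<in> S"
    unfolding hbar_star_def S_def[symmetric] by (rule Max_in)
  then show ?thesis
    unfolding S_def by blast
qed

definition bip_test :: "nat \<Rightarrow> (nat \<Rightarrow> nat set) \<Rightarrow> (nat \<Rightarrow> nat set) \<Rightarrow> (nat \<Rightarrow> real) \<Rightarrow> nat \<Rightarrow> real" where
  "bip_test k A B c u = (\<Sum>i<k. c i * (of_bool (u \<in> A i) - of_bool (u \<in> B i)))"

definition pair_edges :: "nat \<Rightarrow> nat \<Rightarrow> (nat \<Rightarrow> nat set) \<Rightarrow> (nat \<Rightarrow> nat set) \<Rightarrow> nat \<Rightarrow> (nat \<times> nat) set" where
  "pair_edges N k A B i = A i \<times> B i \<union> B i \<times> A i
     \<union> (A i \<union> B i) \<times> rest_set N k A B \<union> rest_set N k A B \<times> (A i \<union> B i)"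

lemma exists_bip_test_orthogonal:
  assumes k: "1 \<le> k" "k \<le> N"
  shows "\<exists>c. (\<exists>i<k. c i \<noteq> 0)
    \<and> (\<forall>j. N - k < j \<longrightarrow> j < N \<longrightarrow> dot N (deg_sqrt_scale N w (bip_test k A B c)) (W j) = 0)"
proof -
  define g where "g i = deg_sqrt_scale N w (\<lambda>u. of_bool (u \<in> A i) - of_bool (u \<in> B i))" for i
  obtain c where c: "\<exists>i<k. c i \<noteq> 0"
    and orth: "\<forall>r<k - 1. dot N (\<lambda>u. \<Sum>i<k. c i * g i u) (W (N - k + 1 + r)) = 0"
    using exists_sum_orthogonal[of "k - 1" k N g "\<lambda>r. W (N - k + 1 + r)"] k by auto
  have "deg_sqrt_scale N w (bip_test k A B c) = (\<lambda>u. \<Sum>i<k. c i * g i u)"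
    unfolding g_def deg_sqrt_scale_def bip_test_def by (simp add: sum_distrib_left mult_ac)
  then have "dot N (deg_sqrt_scale N w (bip_test k A B c)) (W j) = 0" if "N - k < j" "j < N" for j
    using orth[rule_format, of "j - (N - k + 1)"] that k by simp
  then show ?thesis
    using c by blast
qed

context
  fixes N k :: nat and A B :: "nat \<Rightarrow> nat set"
  assumes sb: "sub_bipartition N k A B"
begin

lemma bip_part_subset: "i < k \<Longrightarrow> A i \<union> B i \<subseteq> {..<N}"
  and bip_part_subset_A: "i < k \<Longrightarrow> A i \<subseteq> {..<N}"
  and bip_part_subset_B: "i < k \<Longrightarrow> B i \<subseteq> {..<N}"
  and bip_part_disjoint: "i < k \<Longrightarrow> A i \<inter> B i = {}"
  and bip_part_nonempty: "i < k \<Longrightarrow> A i \<union> B i \<noteq> {}"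
  and bip_parts_disjoint: "i < k \<Longrightarrow> j < k \<Longrightarrow> i \<noteq> j \<Longrightarrow> (A i \<union> B i) \<inter> (A j \<union> B j) = {}"
  using sb unfolding sub_bipartition_def by blast+

lemma bip_part_rest_disjoint: "i < k \<Longrightarrow> (A i \<union> B i) \<inter> rest_set N k A B = {}"
  unfolding rest_set_def by blast

lemma bip_test_eq_single: "j < k \<Longrightarrow> u \<in> A j \<union> B j \<Longrightarrow>
    bip_test k A B c u = c j * (of_bool (u \<in> A j) - of_bool (u \<in> B j))"
  unfolding bip_test_def using bip_parts_disjoint[of j] by (intro sum_eq_single) auto

lemma bip_test_A: "j < k \<Longrightarrow> u \<in> A j \<Longrightarrow> bip_test k A B c u = c j"
  using bip_test_eq_single[of j u c] bip_part_disjoint[of j] by auto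

lemma bip_test_B: "j < k \<Longrightarrow> u \<in> B j \<Longrightarrow> bip_test k A B c u = - c j"
  using bip_test_eq_single[of j u c] bip_part_disjoint[of j] by auto

lemma bip_test_rest: "u \<in> rest_set N k A B \<Longrightarrow> bip_test k A B c u = 0"
  unfolding bip_test_def rest_set_def by (auto intro!: sum.neutral)

lemma bip_test_sq: "u < N \<Longrightarrow> (bip_test k A B c u)\<^sup>2 = (\<Sum>i<k. (c i)\<^sup>2 * of_bool (u \<in> A i \<union> B i))"
proof (cases "u \<in> rest_set N k A B")
  case True
  then show ?thesis
    by (simp add: bip_test_rest rest_set_def)
next
  case False
  moreover assume "u < N"
  ultimately obtain j where j: "j < k" "u \<in> A j \<union> B j"
    unfolding rest_set_def by blast
  have "(\<Sum>i<k. (c i)\<^sup>2 * of_bool (u \<in> A i \<union> B i)) = (c j)\<^sup>2"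
    using j bip_parts_disjoint[of j] by (subst sum_eq_single[of _ j]) auto
  then show ?thesis
    using j bip_test_A bip_test_B by auto
qed

lemma bip_test_mass:
  "(\<Sum>u<N. deg N w u * (bip_test k A B c u)\<^sup>2) = (\<Sum>i<k. (c i)\<^sup>2 * vol N w (A i \<union> B i))"
proof -
  have "(\<Sum>u<N. deg N w u * (bip_test k A B c u)\<^sup>2)
      = (\<Sum>u<N. \<Sum>i<k. deg N w u * ((c i)\<^sup>2 * of_bool (u \<in> A i \<union> B i)))"
    by (intro sum.cong refl) (simp only: bip_test_sq lessThan_iff sum_distrib_left)
  also have "\<dots> = (\<Sum>i<k. (c i)\<^sup>2 * (\<Sum>u<N. deg N w u * of_bool (u \<in> A i \<union> B i)))"
    by (subst sum.swap) (simp only: sum_distrib_left mult.left_commute)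
  also have "\<dots> = (\<Sum>i<k. (c i)\<^sup>2 * vol N w (A i \<union> B i))"
    by (intro sum.cong refl) (simp only: vol_def sum_of_bool_mem[OF bip_part_subset] lessThan_iff)
  finally show ?thesis .
qed

lemma vol_bip_part_pos:
  assumes degpos: "\<And>u. u < N \<Longrightarrow> deg N w u > 0" and i: "i < k"
  shows "vol N w (A i \<union> B i) > 0"
proof -
  obtain u where "u \<in> A i \<union> B i"
    using bip_part_nonempty[OF i] by blast
  then show ?thesis
    unfolding vol_def using bip_part_subset[OF i] degpos
    by (intro sum_pos2[of _ u]) (auto intro: finite_subset less_imp_le)
qed

lemma bip_test_norm_pos:
  assumes degpos: "\<And>u. u < N \<Longrightarrow> deg N w u > 0" and c: "\<exists>i<k. c i \<noteq> 0"
  shows "dot N (deg_sqrt_scale N w (bip_test k A B c)) (deg_sqrt_scale N w (bip_test k A B c)) > 0"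
proof -
  obtain i where "i < k" "c i \<noteq> 0"
    using c by blast
  moreover have "0 \<le> (c j)\<^sup>2 * vol N w (A j \<union> B j)" if "j < k" for j
    using vol_bip_part_pos[OF degpos that] by simp
  ultimately have "0 < (\<Sum>i<k. (c i)\<^sup>2 * vol N w (A i \<union> B i))"
    using vol_bip_part_pos[OF degpos] by (intro sum_pos2[of _ i]) auto
  then show ?thesis
    by (simp add: dot_deg_sqrt_scale degpos bip_test_mass)
qed

lemma energy_on_pair_edges:
  assumes sym: "\<And>u v. u < N \<Longrightarrow> v < N \<Longrightarrow> w u v = w v u" and i: "i < k"
  shows "(\<Sum>(u,l)\<in>pair_edges N k A B i. w u l * (bip_test k A B c u - bip_test k A B c l)\<^sup>2)
    = (c i)\<^sup>2 * (8 * Ew w (A i) (B i) + 2 * Ew w (A i \<union> B i) (rest_set N k A B))"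
proof -
  let ?R = "rest_set N k A B" and ?f = "bip_test k A B c" and ?AB = "A i \<union> B i"
  let ?g = "\<lambda>(u,l). w u l * (?f u - ?f l)\<^sup>2"
  have R: "?R \<subseteq> {..<N}"
    unfolding rest_set_def by blast
  have fin: "finite (A i)" "finite (B i)" "finite ?R"
    using bip_part_subset[OF i] R by (auto intro: finite_subset)
  have sq: "(?f u)\<^sup>2 = (c i)\<^sup>2" if "u \<in> ?AB" for u
    using that bip_test_A[OF i] bip_test_B[OF i] by auto
  have disj: "A i \<times> B i \<inter> B i \<times> A i = {}" "(A i \<times> B i \<union> B i \<times> A i) \<inter> ?AB \<times> ?R = {}"
    "(A i \<times> B i \<union> B i \<times> A i \<union> ?AB \<times> ?R) \<inter> ?R \<times> ?AB = {}"
    using bip_part_disjoint[OF i] bip_part_rest_disjoint[OF i] by blast+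
  have split: "sum ?g (pair_edges N k A B i)
      = sum ?g (A i \<times> B i) + sum ?g (B i \<times> A i) + sum ?g (?AB \<times> ?R) + sum ?g (?R \<times> ?AB)"
  proof -
    have "sum ?g (pair_edges N k A B i)
        = sum ?g (A i \<times> B i \<union> B i \<times> A i \<union> ?AB \<times> ?R) + sum ?g (?R \<times> ?AB)"
      unfolding pair_edges_def by (rule sum.union_disjoint) (use fin disj in auto)
    also have "sum ?g (A i \<times> B i \<union> B i \<times> A i \<union> ?AB \<times> ?R)
        = sum ?g (A i \<times> B i \<union> B i \<times> A i) + sum ?g (?AB \<times> ?R)"
      by (rule sum.union_disjoint) (use fin disj in auto)
    also have "sum ?g (A i \<times> B i \<union> B i \<times> A i) = sum ?g (A i \<times> B i) + sum ?g (B i \<times> A i)"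
      by (rule sum.union_disjoint) (use fin disj in auto)
    finally show ?thesis .
  qed
  have "sum ?g (A i \<times> B i) = 4 * (c i)\<^sup>2 * Ew w (A i) (B i)"
    by (rule sum_product_eq_Ew) (simp add: bip_test_A[OF i] bip_test_B[OF i] power2_eq_square)
  moreover have "sum ?g (B i \<times> A i) = 4 * (c i)\<^sup>2 * Ew w (B i) (A i)"
    by (rule sum_product_eq_Ew) (simp add: bip_test_A[OF i] bip_test_B[OF i] power2_eq_square)
  moreover have "sum ?g (?AB \<times> ?R) = (c i)\<^sup>2 * Ew w ?AB ?R"
    by (rule sum_product_eq_Ew) (simp add: bip_test_rest sq del: Un_iff)
  moreover have "sum ?g (?R \<times> ?AB) = (c i)\<^sup>2 * Ew w ?R ?AB"
    by (rule sum_product_eq_Ew) (simp add: bip_test_rest sq del: Un_iff)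
  ultimately show ?thesis
    unfolding split
    using Ew_sym[OF sym bip_part_subset_A[OF i] bip_part_subset_B[OF i]] Ew_sym[OF sym bip_part_subset[OF i] R]
    by (simp add: algebra_simps)
qed

lemma bip_test_energy_ge:
  assumes nonneg: "\<And>u v. u < N \<Longrightarrow> v < N \<Longrightarrow> w u v \<ge> 0"
    and sym: "\<And>u v. u < N \<Longrightarrow> v < N \<Longrightarrow> w u v = w v u"
  shows "(\<Sum>i<k. (c i)\<^sup>2 * (8 * Ew w (A i) (B i) + 2 * Ew w (A i \<union> B i) (rest_set N k A B)))
    \<le> (\<Sum>u<N. \<Sum>l<N. w u l * (bip_test k A B c u - bip_test k A B c l)\<^sup>2)"
proof -
  let ?g = "\<lambda>(u,l). w u l * (bip_test k A B c u - bip_test k A B c l)\<^sup>2"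
  have sub: "pair_edges N k A B i \<subseteq> {..<N} \<times> {..<N}" if "i < k" for i
    using bip_part_subset[OF that] unfolding pair_edges_def rest_set_def by blast
  have disj: "pair_edges N k A B i \<inter> pair_edges N k A B j = {}" if "i < k" "j < k" "i \<noteq> j" for i j
    using bip_parts_disjoint[OF that] bip_part_rest_disjoint[OF that(1)] bip_part_rest_disjoint[OF that(2)]
    unfolding pair_edges_def by blast
  have "(\<Sum>i<k. (c i)\<^sup>2 * (8 * Ew w (A i) (B i) + 2 * Ew w (A i \<union> B i) (rest_set N k A B)))
      = (\<Sum>i<k. sum ?g (pair_edges N k A B i))"
    by (simp add: energy_on_pair_edges[OF sym])
  also have "\<dots> = sum ?g (\<Union>i<k. pair_edges N k A B i)"
    using sub disj by (intro sum.UNION_disjoint[symmetric]) (auto intro: finite_subset[OF sub])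
  also have "\<dots> \<le> sum ?g ({..<N} \<times> {..<N})"
    using sub nonneg by (intro sum_mono2) auto
  also have "\<dots> = (\<Sum>u<N. \<Sum>l<N. w u l * (bip_test k A B c u - bip_test k A B c l)\<^sup>2)"
    by (simp add: sum.cartesian_product')
  finally show ?thesis .
qed

lemma bip_test_energy_ge_ratio:
  assumes nonneg: "\<And>u v. u < N \<Longrightarrow> v < N \<Longrightarrow> w u v \<ge> 0"
    and sym: "\<And>u v. u < N \<Longrightarrow> v < N \<Longrightarrow> w u v = w v u"
    and degpos: "\<And>u. u < N \<Longrightarrow> deg N w u > 0"
    and h: "\<And>i. i < k \<Longrightarrow> h \<le> bip_ratio N w k A B i"
  shows "4 * h * (\<Sum>u<N. deg N w u * (bip_test k A B c u)\<^sup>2)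
    \<le> (\<Sum>u<N. \<Sum>l<N. w u l * (bip_test k A B c u - bip_test k A B c l)\<^sup>2)"
proof -
  have "4 * h * vol N w (A i \<union> B i) \<le> 8 * Ew w (A i) (B i) + 2 * Ew w (A i \<union> B i) (rest_set N k A B)"
    if i: "i < k" for i
    using h[OF i] vol_bip_part_pos[OF degpos i] unfolding bip_ratio_def by (simp add: pos_le_divide_eq)
  then have "(\<Sum>i<k. (c i)\<^sup>2 * (4 * h * vol N w (A i \<union> B i)))
      \<le> (\<Sum>i<k. (c i)\<^sup>2 * (8 * Ew w (A i) (B i) + 2 * Ew w (A i \<union> B i) (rest_set N k A B)))"
    by (intro sum_mono mult_left_mono) auto
  moreover have "(\<Sum>i<k. (c i)\<^sup>2 * (4 * h * vol N w (A i \<union> B i)))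
      = 4 * h * (\<Sum>i<k. (c i)\<^sup>2 * vol N w (A i \<union> B i))"
    by (simp add: sum_distrib_left mult_ac)
  ultimately show ?thesis
    using bip_test_energy_ge[where w = w and c = c, OF nonneg sym] unfolding bip_test_mass by linarith
qed

lemma bip_test_rayleigh_ge:
  assumes nonneg: "\<And>u v. u < N \<Longrightarrow> v < N \<Longrightarrow> w u v \<ge> 0"
    and sym: "\<And>u v. u < N \<Longrightarrow> v < N \<Longrightarrow> w u v = w v u"
    and noloop: "\<And>u. u < N \<Longrightarrow> w u u = 0" and degpos: "\<And>u. u < N \<Longrightarrow> deg N w u > 0"
    and h: "\<And>i. i < k \<Longrightarrow> h \<le> bip_ratio N w k A B i"
  shows "2 * h * dot N (deg_sqrt_scale N w (bip_test k A B c)) (deg_sqrt_scale N w (bip_test k A B c))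
    \<le> dot N (deg_sqrt_scale N w (bip_test k A B c))
        (mulv N (sym_norm_lap N w) (deg_sqrt_scale N w (bip_test k A B c)))"
  using bip_test_energy_ge_ratio[OF nonneg sym degpos h, of c]
    sym_norm_lap_quadratic_form[OF sym noloop degpos, of "bip_test k A B c"] dot_deg_sqrt_scale[OF degpos]
  by simp

end

theorem theorem4p1:
  fixes N k :: nat and w :: "nat \<Rightarrow> nat \<Rightarrow> real"
  assumes sym: "\<And>u v. u < N \<Longrightarrow> v < N \<Longrightarrow> w u v = w v u"
    and nonneg: "\<And>u v. u < N \<Longrightarrow> v < N \<Longrightarrow> w u v \<ge> 0"
    and noloop: "\<And>u. u < N \<Longrightarrow> w u u = 0"
    and degpos: "\<And>u. u < N \<Longrightarrow> deg N w u > 0"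
    and k: "1 \<le> k" "k \<le> N"
  shows "lap_eigs N w ! (N - k) \<ge> 2 * hbar_star N w k"
proof -
  let ?S = "sym_norm_lap N w" and ?ev = "lap_eigs N w" and ?h = "hbar_star N w k"
  obtain W where W: "orthogonal_family N W N" and eig: "\<forall>j<N. \<forall>i<N. mulv N ?S (W j) i = ?ev ! j * W j i"
    and span: "lspan N W N = UNIV"
    using lap_eigs_orthogonal_eigenbasis[OF sym noloop degpos] by blast
  obtain A B where sb: "sub_bipartition N k A B" and h: "?h = Min (bip_ratio N w k A B ` {..<k})"
    using hbar_star_attained[OF k(2)] by blast
  have h_le: "?h \<le> bip_ratio N w k A B i" if "i < k" for i
    unfolding h using that by (intro Min_le) auto
  obtain c where c: "\<exists>i<k. c i \<noteq> 0"
    and orth: "\<forall>j. N - k < j \<longrightarrow> j < N \<longrightarrow> dot N (deg_sqrt_scale N w (bip_test k A B c)) (W j) = 0"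
    using exists_bip_test_orthogonal[where w = w and A = A and B = B and W = W, OF k] by blast
  define x where "x = deg_sqrt_scale N w (bip_test k A B c)"
  have bottom: "?ev ! j \<le> ?ev ! (N - k)" if "j < N - k + 1" for j
    using lap_eigs_sym_norm_lap[OF sym noloop degpos] that k by (intro sorted_nth_mono) auto
  have "dot N x (mulv N ?S x) \<le> ?ev ! (N - k) * dot N x x"
    by (rule rayleigh_le_if_orthogonal_to_top[OF W _ _ _ bottom]) (use eig span orth in \<open>auto simp: x_def\<close>)
  moreover have "2 * ?h * dot N x x \<le> dot N x (mulv N ?S x)"
    unfolding x_def by (rule bip_test_rayleigh_ge[OF sb nonneg sym noloop degpos h_le])
  ultimately have "2 * ?h * dot N x x \<le> ?ev ! (N - k) * dot N x x"
    by linarith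
  moreover have "dot N x x > 0"
    unfolding x_def by (rule bip_test_norm_pos[OF sb degpos c])
  ultimately show ?thesis
    by (rule mult_right_le_imp_le)
qed

end
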